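(* There exist universal constants $c_{\lambda_0}>0$ and $C>0$ such that the following holds. In the setting described in the context, let $\lambda\ge 0$ and $\lambda_0\geq c_{\lambda_0}\sigma^2\log(ep)/n$, and let $(\hat\alpha,\hat{\boldsymbol\beta})$ be any global minimiser of $$\frac1n\|\boldsymbol y-\alpha\mathbf 1-\boldsymbol X\boldsymbol\beta\|_2^2+\lambda_0\|\boldsymbol\beta\|_0+\lambda\sum_{j=1}^q\big|\{\beta_k:k\in\mathcal I_j\}\big|$$ over $\alpha\in\mathbb R,\boldsymbol\beta\in\mathbb R^p$. Then, with probability at least $1-4(ep)^{-9}$, $$\frac1n\|\mathbf f^*-\boldsymbol X\hat{\boldsymbol\beta}-\hat\alpha\mathbf 1\|_2^2+\lambda\hat K\le C\Big(\inf_{\boldsymbol\beta\in\mathbb R^p,\alpha\in\mathbb R}\Big\{\frac1n\|\mathbf f^*-\boldsymbol X\boldsymbol\beta-\alpha\mathbf 1\|_2^2+\lambda_0\|\boldsymbol\beta\|_0+\lambda K(\boldsymbol\beta)\Big\}+\frac{\sigma^2\log(ep)}{n}\Big).$$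
   Context: Setting: $q\ge1$ categorical predictors, the $j$-th taking values in $[p_j]=\{1,\dots,p_j\}$, and $N\ge0$ continuous predictors; $p=N+\sum_{j=1}^q p_j$. There are $n$ observations; observation $i$ has categorical values $C^{(i)}_j\in[p_j]$ and continuous values $W^{(i)}_1,\dots,W^{(i)}_N$. The design matrix $\boldsymbol X\in\mathbb R^{n\times p}$ has $i$-th row $(\mathbf 1(C^{(i)}_1=1),\dots,\mathbf 1(C^{(i)}_1=p_1),\dots,\mathbf 1(C^{(i)}_q=1),\dots,\mathbf 1(C^{(i)}_q=p_q),W^{(i)}_1,\dots,W^{(i)}_N)$, where $\mathbf 1(\cdot)$ is the indicator. $\mathcal I_1=\{1,\dots,p_1\}$, $\mathcal I_2=\{p_1+1,\dots,p_1+p_2\}$, etc., are the column index sets of the dummy variables of the categorical predictors. The data are $\boldsymbol y=\mathbf f^*+\boldsymbol\epsilon$ where $\mathbf f^*\in\mathbb R^n$ (an arbitrary mean vector, no model assumed) and $\boldsymbol X$ are deterministic and $\boldsymbol\epsilon\sim\mathcal N(\mathbf 0,\sigma^2\boldsymbol I_n)$. $\mathbf 1\in\mathbb R^n$ also denotes the all-ones vector. $\|\boldsymbol\beta\|_0$ is the number of nonzero entries. For $\boldsymbol\beta\in\mathbb R^p$, $K(\boldsymbol\beta)=\sum_{j=1}^q|\{\beta_i:i\in\mathcal I_j,\beta_i\ne0\}|$ (total number of distinct nonzero coefficient values, counted per categorical predictor), and $\hat K=K(\hat{\boldsymbol\beta})$. Universal constants do not depend on $n,p,q,N,\sigma,\mathbf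 f^*,\boldsymbol X,\lambda,\lambda_0$. *)

theory Defs
  imports "HOL-Probability.Probability"
begin

text \<open>Categorical predictors are indexed j = 1..q, with levels 1..pj j.
Columns of the design matrix are indexed 0..<p (0-based). Observations are i = 0..<n,
continuous predictors k = 1..N.\<close>

definition Pcat :: "nat \<Rightarrow> (nat \<Rightarrow> nat) \<Rightarrow> nat" where
  "Pcat q pj = (\<Sum>j\<in>{1..q}. pj j)"

definition ptot :: "nat \<Rightarrow> (nat \<Rightarrow> nat) \<Rightarrow> nat \<Rightarrow> nat" where
  "ptot q pj N = N + Pcat q pj"

definition offs :: "(nat \<Rightarrow> nat) \<Rightarrow> nat \<Rightarrow> nat" where
  "offs pj j = (\<Sum>i\<in>{1..<j}. pj i)"

definition Iset :: "(nat \<Rightarrow> nat) \<Rightarrow> nat \<Rightarrow> nat set" where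
  "Iset pj j = {offs pj j ..< offs pj j + pj j}"

text \<open>Entry (i,c) of the design matrix; Cv i j = value of categorical predictor j for
observation i, W i k = value of continuous predictor k for observation i.\<close>
definition design :: "nat \<Rightarrow> (nat \<Rightarrow> nat) \<Rightarrow> nat \<Rightarrow> (nat \<Rightarrow> nat \<Rightarrow> nat)
    \<Rightarrow> (nat \<Rightarrow> nat \<Rightarrow> real) \<Rightarrow> nat \<Rightarrow> nat \<Rightarrow> real" where
  "design q pj N Cv W i c =
     (\<Sum>j\<in>{1..q}. if c \<in> Iset pj j \<and> Cv i j = c - offs pj j + 1 then 1 else 0)
     + (if Pcat q pj \<le> c \<and> c < ptot q pj N then W i (c - Pcat q pj + 1) else 0)"

definition Xb :: "nat \<Rightarrow> (nat \<Rightarrow> nat) \<Rightarrow> nat \<Rightarrow> (nat \<Rightarrow> nat \<Rightarrow> nat)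
    \<Rightarrow> (nat \<Rightarrow> nat \<Rightarrow> real) \<Rightarrow> (nat \<Rightarrow> real) \<Rightarrow> nat \<Rightarrow> real" where
  "Xb q pj N Cv W \<beta> i = (\<Sum>c<ptot q pj N. design q pj N Cv W i c * \<beta> c)"

definition l0 :: "nat \<Rightarrow> (nat \<Rightarrow> real) \<Rightarrow> nat" where
  "l0 p \<beta> = card {k\<in>{..<p}. \<beta> k \<noteq> 0}"

definition nvals :: "nat \<Rightarrow> (nat \<Rightarrow> nat) \<Rightarrow> (nat \<Rightarrow> real) \<Rightarrow> nat" where
  "nvals q pj \<beta> = (\<Sum>j\<in>{1..q}. card (\<beta> ` Iset pj j))"

definition Kfun :: "nat \<Rightarrow> (nat \<Rightarrow> nat) \<Rightarrow> (nat \<Rightarrow> real) \<Rightarrow> nat" where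
  "Kfun q pj \<beta> = (\<Sum>j\<in>{1..q}. card (\<beta> ` Iset pj j - {0}))"

definition sqnorm :: "nat \<Rightarrow> (nat \<Rightarrow> real) \<Rightarrow> real" where
  "sqnorm n v = (\<Sum>i<n. (v i)\<^sup>2)"

definition noise_space :: "nat \<Rightarrow> real \<Rightarrow> (nat \<Rightarrow> real) measure" where
  "noise_space n \<sigma> = PiM {..<n} (\<lambda>_. density lborel (normal_density 0 \<sigma>))"

definition objective :: "nat \<Rightarrow> nat \<Rightarrow> (nat \<Rightarrow> nat) \<Rightarrow> nat \<Rightarrow> (nat \<Rightarrow> nat \<Rightarrow> nat)
    \<Rightarrow> (nat \<Rightarrow> nat \<Rightarrow> real) \<Rightarrow> real \<Rightarrow> real \<Rightarrow> (nat \<Rightarrow> real) \<Rightarrow> real \<Rightarrow> (nat \<Rightarrow> real) \<Rightarrow> real" where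
  "objective n q pj N Cv W lam lam0 y \<alpha> \<beta> =
     sqnorm n (\<lambda>i. y i - \<alpha> - Xb q pj N Cv W \<beta> i) / real n
     + lam0 * real (l0 (ptot q pj N) \<beta>) + lam * real (nvals q pj \<beta>)"

definition risk :: "nat \<Rightarrow> nat \<Rightarrow> (nat \<Rightarrow> nat) \<Rightarrow> nat \<Rightarrow> (nat \<Rightarrow> nat \<Rightarrow> nat)
    \<Rightarrow> (nat \<Rightarrow> nat \<Rightarrow> real) \<Rightarrow> real \<Rightarrow> real \<Rightarrow> (nat \<Rightarrow> real) \<Rightarrow> real \<Rightarrow> (nat \<Rightarrow> real) \<Rightarrow> real" where
  "risk n q pj N Cv W lam lam0 f \<alpha> \<beta> =
     sqnorm n (\<lambda>i. f i - Xb q pj N Cv W \<beta> i - \<alpha>) / real n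
     + lam0 * real (l0 (ptot q pj N) \<beta>) + lam * real (Kfun q pj \<beta>)"

end

theory Submission
  imports Defs
begin

(* A minimiser has a zero coefficient in every group: subtracting a coefficient
   value from its whole group and adding it to the intercept changes neither the fit nor the
   number of distinct values in the group, but lowers the l0 penalty if the group had no zero.
   So the lambda-penalty of the minimiser is exactly lambda (K + q), and comparing objectives
   with an arbitrary (alpha, beta) leaves a single random term 2 <eps, v>, where v lies in the
   span of the intercept and of the columns in supp beta_hat \<union> supp beta.  That term is at
   most |v|^2/4 + 4 |P_T eps|^2, with P_T the projection onto the span of the intercept and
   the columns in T.  Since E exp(|P_T eps|^2 / (4 sigma^2)) <= sqrt 2 ^ (|T| + 1), the event
   |P_T eps|^2 > 40 sigma^2 (|T| + 1) log(ep) has probability at most (2 (ep)^-10)^(|T| + 1),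
   and a union bound over all 2^p supports costs 4 (ep)^-9.  Off this event the condition
   lambda0 >= 320 sigma^2 log(ep) / n lets half of the l0 penalty absorb the |T| log(ep)
   terms. *)

section \<open>Gaussian moment generating functions\<close>

lemma nn_integral_normal_density_eq_1:
  "\<sigma> > 0 \<Longrightarrow> (\<integral>\<^sup>+x. ennreal (normal_density \<mu> \<sigma> x) \<partial>lborel) = 1"
  by (subst nn_integral_eq_integral[OF integrable_normal_density]) auto

lemma nn_integral_normal_exp_linear:
  assumes "\<sigma> > 0"
  shows "(\<integral>\<^sup>+x. ennreal (exp (a * x)) \<partial>density lborel (normal_density 0 \<sigma>))
    = ennreal (exp (a\<^sup>2 * \<sigma>\<^sup>2 / 2))"
proof -
  have completed_square:
    "normal_density 0 \<sigma> x * exp (a * x) = exp (a\<^sup>2 * \<sigma>\<^sup>2 / 2) * normal_density (a * \<sigma>\<^sup>2) \<sigma> x" for x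
  proof -
    have "- (x - 0)\<^sup>2 / (2 * \<sigma>\<^sup>2) + a * x = a\<^sup>2 * \<sigma>\<^sup>2 / 2 + - (x - a * \<sigma>\<^sup>2)\<^sup>2 / (2 * \<sigma>\<^sup>2)"
      using assms by (simp add: field_simps power2_eq_square)
    then show ?thesis
      unfolding normal_density_def by (simp add: exp_add[symmetric] algebra_simps)
  qed
  have "(\<integral>\<^sup>+x. ennreal (exp (a * x)) \<partial>density lborel (normal_density 0 \<sigma>))
      = (\<integral>\<^sup>+x. ennreal (exp (a\<^sup>2 * \<sigma>\<^sup>2 / 2)) * ennreal (normal_density (a * \<sigma>\<^sup>2) \<sigma> x) \<partial>lborel)"
    by (subst nn_integral_density)
       (auto intro!: nn_integral_cong simp: ennreal_mult'[symmetric] completed_square)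
  also have "\<dots> = ennreal (exp (a\<^sup>2 * \<sigma>\<^sup>2 / 2))"
    by (subst nn_integral_cmult) (auto simp: nn_integral_normal_density_eq_1 assms)
  finally show ?thesis .
qed

lemma nn_integral_std_normal_exp_sq:
  "(\<integral>\<^sup>+x. ennreal (exp (x\<^sup>2 / 4)) \<partial>density lborel (normal_density 0 1)) = ennreal (sqrt 2)"
proof -
  have rescaled: "normal_density 0 1 x * exp (x\<^sup>2 / 4) = sqrt 2 * normal_density 0 (sqrt 2) x" for x
  proof -
    have "exp (- (x - 0)\<^sup>2 / (2 * 1\<^sup>2)) * exp (x\<^sup>2 / 4) = exp (- (x - 0)\<^sup>2 / (2 * (sqrt 2)\<^sup>2))"
      by (simp add: exp_add[symmetric] field_simps power2_eq_square)
    moreover have "1 / sqrt (2 * pi * 1\<^sup>2) = sqrt 2 * (1 / sqrt (2 * pi * (sqrt 2)\<^sup>2))"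
      by (simp add: real_sqrt_mult field_simps)
    ultimately show ?thesis
      unfolding normal_density_def by (simp add: algebra_simps)
  qed
  have "(\<integral>\<^sup>+x. ennreal (exp (x\<^sup>2 / 4)) \<partial>density lborel (normal_density 0 1))
      = (\<integral>\<^sup>+x. ennreal (sqrt 2) * ennreal (normal_density 0 (sqrt 2) x) \<partial>lborel)"
    by (subst nn_integral_density)
       (auto intro!: nn_integral_cong simp: ennreal_mult'[symmetric] rescaled)
  also have "\<dots> = ennreal (sqrt 2)"
    by (subst nn_integral_cmult) (auto simp: nn_integral_normal_density_eq_1)
  finally show ?thesis .
qed

lemma prob_space_noise_space: "\<sigma> > 0 \<Longrightarrow> prob_space (noise_space n \<sigma>)"
  unfolding noise_space_def by (intro prob_space_PiM prob_space_normal_density)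

lemma product_prob_space_normal_density:
  "\<sigma> > 0 \<Longrightarrow> product_prob_space (\<lambda>_. density lborel (normal_density 0 \<sigma>))"
  by (auto simp: product_prob_space_def product_sigma_finite_def product_prob_space_axioms_def
      prob_space_normal_density prob_space_imp_sigma_finite)

lemma nn_integral_noise_exp_linear:
  assumes "\<sigma> > 0"
  shows "(\<integral>\<^sup>+\<epsilon>. ennreal (exp (\<Sum>i<n. w i * \<epsilon> i)) \<partial>noise_space n \<sigma>)
       = ennreal (exp (\<sigma>\<^sup>2 * (\<Sum>i<n. (w i)\<^sup>2) / 2))"
proof -
  interpret product_prob_space "\<lambda>_. density lborel (normal_density 0 \<sigma>)"
    using product_prob_space_normal_density assms .
  have "(\<integral>\<^sup>+\<epsilon>. ennreal (exp (\<Sum>i<n. w i * \<epsilon> i)) \<partial>noise_space n \<sigma>)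
      = (\<integral>\<^sup>+\<epsilon>. (\<Prod>i<n. ennreal (exp (w i * \<epsilon> i))) \<partial>noise_space n \<sigma>)"
    by (simp add: exp_sum prod_ennreal)
  also have "\<dots> = (\<Prod>i<n. ennreal (exp ((w i)\<^sup>2 * \<sigma>\<^sup>2 / 2)))"
    unfolding noise_space_def
    by (subst product_nn_integral_prod) (auto simp: nn_integral_normal_exp_linear assms)
  also have "\<dots> = ennreal (exp (\<sigma>\<^sup>2 * (\<Sum>i<n. (w i)\<^sup>2) / 2))"
    by (simp add: prod_ennreal exp_sum[symmetric] sum_divide_distrib sum_distrib_left algebra_simps)
  finally show ?thesis .
qed

lemma nn_integral_std_noise_exp_sq:
  "(\<integral>\<^sup>+g. ennreal (exp (\<Sum>k<d. (g k)\<^sup>2 / 4)) \<partial>noise_space d 1) = ennreal (sqrt 2 ^ d)"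
proof -
  interpret product_prob_space "\<lambda>_. density lborel (normal_density 0 1)"
    using product_prob_space_normal_density[of 1] by simp
  have "(\<integral>\<^sup>+g. ennreal (exp (\<Sum>k<d. (g k)\<^sup>2 / 4)) \<partial>noise_space d 1)
      = (\<integral>\<^sup>+g. (\<Prod>k<d. ennreal (exp ((g k)\<^sup>2 / 4))) \<partial>noise_space d 1)"
    by (simp add: exp_sum prod_ennreal)
  also have "\<dots> = (\<Prod>k<d. ennreal (sqrt 2))"
    unfolding noise_space_def
    by (subst product_nn_integral_prod) (auto simp: nn_integral_std_normal_exp_sq)
  finally show ?thesis by (simp add: ennreal_power)
qed

section \<open>Orthonormal systems\<close>

definition dot :: "nat \<Rightarrow> (nat \<Rightarrow> real) \<Rightarrow> (nat \<Rightarrow> real) \<Rightarrow> real" where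
  "dot n u v = (\<Sum>i<n. u i * v i)"

definition lin_comb :: "('a \<Rightarrow> nat \<Rightarrow> real) \<Rightarrow> 'a set \<Rightarrow> ('a \<Rightarrow> real) \<Rightarrow> nat \<Rightarrow> real" where
  "lin_comb g J a i = (\<Sum>j\<in>J. a j * g j i)"

definition orthonormal :: "nat \<Rightarrow> (nat \<Rightarrow> nat \<Rightarrow> real) \<Rightarrow> nat \<Rightarrow> bool" where
  "orthonormal n us d \<longleftrightarrow> (\<forall>k<d. \<forall>l<d. dot n (us k) (us l) = (if k = l then 1 else 0))"

definition in_orthonormal_span :: "nat \<Rightarrow> (nat \<Rightarrow> nat \<Rightarrow> real) \<Rightarrow> nat \<Rightarrow> (nat \<Rightarrow> real) \<Rightarrow> bool" where
  "in_orthonormal_span n us d w \<longleftrightarrow> (\<forall>i<n. w i = lin_comb us {..<d} (\<lambda>k. dot n w (us k)) i)"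

lemma dot_commute: "dot n u v = dot n v u"
  unfolding dot_def by (simp add: mult.commute)

lemma dot_cong:
  "(\<And>i. i < n \<Longrightarrow> u i = u' i) \<Longrightarrow> (\<And>i. i < n \<Longrightarrow> v i = v' i) \<Longrightarrow> dot n u v = dot n u' v'"
  unfolding dot_def by (intro sum.cong) auto

lemma dot_lin_comb_left: "dot n (lin_comb g J a) u = (\<Sum>j\<in>J. a j * dot n (g j) u)"
  unfolding dot_def lin_comb_def
  by (simp add: sum_distrib_left sum_distrib_right sum.swap[of _ J] algebra_simps)

lemma dot_diff_left: "dot n (\<lambda>i. x i - y i) u = dot n x u - dot n y u"
  unfolding dot_def by (simp add: sum_subtractf algebra_simps)

lemma dot_divide_left: "dot n (\<lambda>i. x i / c) u = dot n x u / c"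
  unfolding dot_def by (simp add: sum_divide_distrib)

lemma dot_divide_right: "dot n u (\<lambda>i. v i / c) = dot n u v / c"
  unfolding dot_def by (simp add: sum_divide_distrib)

lemma dot_self_nonneg: "dot n w w \<ge> 0"
  unfolding dot_def by (intro sum_nonneg) auto

lemma dot_self_eq_0_iff: "dot n w w = 0 \<longleftrightarrow> (\<forall>i<n. w i = 0)"
  unfolding dot_def by (subst sum_nonneg_eq_0_iff) auto

lemma sqnorm_eq_dot: "sqnorm n w = dot n w w"
  unfolding sqnorm_def dot_def by (simp add: power2_eq_square)

lemma dot_diff_self_le: "dot n (\<lambda>i. x i - y i) (\<lambda>i. x i - y i) \<le> 2 * sqnorm n x + 2 * sqnorm n y"
proof -
  have "(x i - y i) * (x i - y i) \<le> 2 * (x i)\<^sup>2 + 2 * (y i)\<^sup>2" for i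
    using zero_le_power2[of "x i + y i"] by (simp add: power2_eq_square algebra_simps)
  then show ?thesis
    unfolding dot_def sqnorm_def sum_distrib_left sum.distrib[symmetric] by (intro sum_mono)
qed

lemma dot_orthonormal_expansion:
  assumes "in_orthonormal_span n us d w"
  shows "dot n w e = (\<Sum>k<d. dot n w (us k) * dot n (us k) e)"
proof -
  have "dot n w e = dot n (lin_comb us {..<d} (\<lambda>k. dot n w (us k))) e"
    using assms unfolding in_orthonormal_span_def by (intro dot_cong) auto
  then show ?thesis by (simp add: dot_lin_comb_left)
qed

lemma in_orthonormal_span_lin_comb:
  assumes "\<And>j. j \<in> J \<Longrightarrow> in_orthonormal_span n us d (g j)"
  shows "in_orthonormal_span n us d (lin_comb g J a)"
  unfolding in_orthonormal_span_def
proof safe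
  fix i assume "i < n"
  then have "lin_comb g J a i = (\<Sum>j\<in>J. a j * lin_comb us {..<d} (\<lambda>k. dot n (g j) (us k)) i)"
    using assms unfolding in_orthonormal_span_def lin_comb_def[of g] by (intro sum.cong) auto
  also have "\<dots> = lin_comb us {..<d} (\<lambda>k. dot n (lin_comb g J a) (us k)) i"
    by (simp add: lin_comb_def dot_lin_comb_left sum_distrib_left sum_distrib_right
        sum.swap[of _ J] algebra_simps)
  finally show "lin_comb g J a i = lin_comb us {..<d} (\<lambda>k. dot n (lin_comb g J a) (us k)) i" .
qed

lemma dot_lin_comb_orthonormal:
  assumes "orthonormal n us d" "l < d"
  shows "dot n (lin_comb us {..<d} a) (us l) = a l"
proof -
  have "dot n (lin_comb us {..<d} a) (us l) = (\<Sum>k<d. if k = l then a l else 0)"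
    using assms unfolding orthonormal_def dot_lin_comb_left by (intro sum.cong) auto
  with assms(2) show ?thesis by simp
qed

lemma dot_orthonormal_residual:
  assumes "orthonormal n us d" "l < d"
  shows "dot n (us l) (\<lambda>i. b i - lin_comb us {..<d} (\<lambda>k. dot n b (us k)) i) = 0"
  using dot_lin_comb_orthonormal[OF assms]
  by (simp add: dot_commute[of n "us l"] dot_diff_left)

lemma orthonormal_fun_upd:
  assumes "orthonormal n us d" and "\<And>l. l < d \<Longrightarrow> dot n (us l) u = 0" and "dot n u u = 1"
  shows "orthonormal n (us(d := u)) (Suc d)"
  using assms unfolding orthonormal_def by (simp add: less_Suc_eq dot_commute[of n u "us _"])

lemma lin_comb_fun_upd_Suc:
  "lin_comb (us(d := u)) {..<Suc d} (\<lambda>k. dot n w ((us(d := u)) k)) i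
    = lin_comb us {..<d} (\<lambda>k. dot n w (us k)) i + dot n w u * u i"
  by (simp add: lin_comb_def)

lemma orthonormal_extend:
  assumes on: "orthonormal n us d"
  obtains us' d' where "orthonormal n us' d'" "d' \<le> Suc d" "in_orthonormal_span n us' d' b"
    "\<And>w. in_orthonormal_span n us d w \<Longrightarrow> in_orthonormal_span n us' d' w"
proof -
  define r where "r = (\<lambda>i. b i - lin_comb us {..<d} (\<lambda>k. dot n b (us k)) i)"
  have r_orth: "dot n (us l) r = 0" if "l < d" for l
    unfolding r_def by (rule dot_orthonormal_residual[OF on that])
  show ?thesis
  proof (cases "dot n r r = 0")
    case True
    then have "in_orthonormal_span n us d b"
      unfolding in_orthonormal_span_def dot_self_eq_0_iff r_def by simp
    with on show ?thesis by (intro that[of us d]) auto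
  next
    case False
    define nr where "nr = sqrt (dot n r r)"
    have nr: "nr > 0" "nr * nr = dot n r r"
      using False dot_self_nonneg[of n r] by (auto simp: nr_def)
    define u where "u = (\<lambda>i. r i / nr)"
    have u_orth: "dot n (us l) u = 0" if "l < d" for l
      using r_orth[OF that] by (simp add: u_def dot_divide_right)
    have "dot n u u = 1"
      using nr(1) by (simp add: u_def dot_divide_left dot_divide_right nr(2)[symmetric])
    with on u_orth have "orthonormal n (us(d := u)) (Suc d)"
      by (rule orthonormal_fun_upd)
    moreover have "in_orthonormal_span n (us(d := u)) (Suc d) b"
    proof -
      have "dot n r r = dot n b r - dot n (lin_comb us {..<d} (\<lambda>k. dot n b (us k))) r"
        unfolding r_def by (rule dot_diff_left)
      also have "dot n (lin_comb us {..<d} (\<lambda>k. dot n b (us k))) r = 0"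
        using r_orth by (simp add: dot_lin_comb_left)
      finally have "dot n b r = nr * nr"
        using nr(2) by linarith
      then have bu: "dot n b u = nr"
        using nr(1) by (simp add: u_def dot_divide_right)
      have "b i = lin_comb us {..<d} (\<lambda>k. dot n b (us k)) i + nr * u i" for i
        using nr(1) by (simp add: u_def r_def)
      then show ?thesis
        unfolding in_orthonormal_span_def lin_comb_fun_upd_Suc bu by blast
    qed
    moreover have "in_orthonormal_span n (us(d := u)) (Suc d) w"
      if w: "in_orthonormal_span n us d w" for w
    proof -
      have wu: "dot n w u = 0"
        using u_orth dot_orthonormal_expansion[OF w, of u] by simp
      show ?thesis
        using w unfolding in_orthonormal_span_def lin_comb_fun_upd_Suc wu mult_zero_left add_0_right .
    qed
    ultimately show ?thesis
      using that by blast
  qed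
qed

lemma gram_schmidt:
  assumes "finite J"
  shows "\<exists>us d. orthonormal n us d \<and> d \<le> card J \<and> (\<forall>j\<in>J. in_orthonormal_span n us d (g j))"
  using assms
proof (induction J rule: finite_induct)
  case empty
  show ?case by (auto simp: orthonormal_def)
next
  case (insert j J)
  then obtain us d where on: "orthonormal n us d" and "d \<le> card J"
    and span: "\<forall>j\<in>J. in_orthonormal_span n us d (g j)"
    by blast
  obtain us' d' where "orthonormal n us' d'" "d' \<le> Suc d" "in_orthonormal_span n us' d' (g j)"
    "\<And>w. in_orthonormal_span n us d w \<Longrightarrow> in_orthonormal_span n us' d' w"
    using orthonormal_extend[OF on, of "g j"] by blast
  with insert.hyps span \<open>d \<le> card J\<close> show ?case
    by (intro exI[of _ us'] exI[of _ d']) auto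
qed

section \<open>Projections of Gaussian noise onto sparse models\<close>

lemma nn_integral_noise_exp_projection_sq:
  assumes \<sigma>: "\<sigma> > 0" and on: "orthonormal n us d"
  shows "(\<integral>\<^sup>+\<epsilon>. ennreal (exp ((\<Sum>k<d. (dot n (us k) \<epsilon>)\<^sup>2) / (4 * \<sigma>\<^sup>2))) \<partial>noise_space n \<sigma>)
    = ennreal (sqrt 2 ^ d)"
proof -
  define c where "c = sqrt 2 * \<sigma>"
  have c: "c > 0" "c\<^sup>2 = 2 * \<sigma>\<^sup>2" using \<sigma> by (auto simp: c_def power_mult_distrib)
  interpret N: prob_space "noise_space n \<sigma>" using prob_space_noise_space \<sigma> .
  interpret G: prob_space "noise_space d 1" using prob_space_noise_space[of 1] by simp
  interpret pair_sigma_finite "noise_space n \<sigma>" "noise_space d 1" ..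
  \<comment> \<open>exp (|z|^2 / 2) is the moment generating function at z of a standard Gaussian vector g;
      after swapping the integrals, orthonormality makes the inner integral a Gaussian moment
      generating function again.\<close>
  have linearised: "ennreal (exp ((\<Sum>k<d. (dot n (us k) \<epsilon>)\<^sup>2) / (4 * \<sigma>\<^sup>2)))
      = (\<integral>\<^sup>+g. ennreal (exp (\<Sum>k<d. (dot n (us k) \<epsilon> / c) * g k)) \<partial>noise_space d 1)" for \<epsilon>
  proof -
    have "(\<Sum>k<d. (dot n (us k) \<epsilon>)\<^sup>2) / (4 * \<sigma>\<^sup>2) = 1\<^sup>2 * (\<Sum>k<d. (dot n (us k) \<epsilon> / c)\<^sup>2) / 2"
      using c \<sigma> by (simp add: power_divide sum_divide_distrib[symmetric])
    then show ?thesis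
      using nn_integral_noise_exp_linear[where \<sigma>=1 and n=d and w="\<lambda>k. dot n (us k) \<epsilon> / c"] by simp
  qed
  have inner: "(\<integral>\<^sup>+\<epsilon>. ennreal (exp (\<Sum>k<d. (dot n (us k) \<epsilon> / c) * g k)) \<partial>noise_space n \<sigma>)
      = ennreal (exp (\<Sum>k<d. (g k)\<^sup>2 / 4))" for g
  proof -
    define v where "v = lin_comb us {..<d} (\<lambda>k. g k / c)"
    have "(\<Sum>k<d. (dot n (us k) \<epsilon> / c) * g k) = (\<Sum>i<n. v i * \<epsilon> i)" for \<epsilon>
      using dot_lin_comb_left[of n us "{..<d}" "\<lambda>k. g k / c" \<epsilon>]
      by (simp add: v_def dot_def mult.commute)
    moreover have "(\<Sum>i<n. (v i)\<^sup>2) = (\<Sum>k<d. (g k)\<^sup>2) / c\<^sup>2"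
    proof -
      have "(\<Sum>i<n. (v i)\<^sup>2) = dot n v v"
        by (simp add: dot_def power2_eq_square)
      also have "\<dots> = (\<Sum>k<d. g k / c * dot n (us k) v)"
        by (subst (1) v_def) (rule dot_lin_comb_left)
      also have "\<dots> = (\<Sum>k<d. (g k / c)\<^sup>2)"
        unfolding v_def using dot_lin_comb_orthonormal[OF on]
        by (intro sum.cong) (simp_all add: dot_commute[of n "us _"] power2_eq_square)
      finally show ?thesis by (simp add: power_divide sum_divide_distrib)
    qed
    ultimately show ?thesis
      using c \<sigma> by (simp add: nn_integral_noise_exp_linear sum_divide_distrib[symmetric])
  qed
  have "(\<lambda>(\<epsilon>, g). ennreal (exp (\<Sum>k<d. (dot n (us k) \<epsilon> / c) * g k)))
      \<in> borel_measurable (noise_space n \<sigma> \<Otimes>\<^sub>M noise_space d 1)"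
    unfolding dot_def noise_space_def by measurable
  from Fubini'[OF this]
  have "(\<integral>\<^sup>+\<epsilon>. ennreal (exp ((\<Sum>k<d. (dot n (us k) \<epsilon>)\<^sup>2) / (4 * \<sigma>\<^sup>2))) \<partial>noise_space n \<sigma>)
      = (\<integral>\<^sup>+g. ennreal (exp (\<Sum>k<d. (g k)\<^sup>2 / 4)) \<partial>noise_space d 1)"
    by (simp only: linearised inner)
  then show ?thesis by (simp add: nn_integral_std_noise_exp_sq)
qed

lemma noise_projection_tail:
  assumes \<sigma>: "\<sigma> > 0" and on: "orthonormal n us d"
  shows "measure (noise_space n \<sigma>) {\<epsilon>\<in>space (noise_space n \<sigma>). x < (\<Sum>k<d. (dot n (us k) \<epsilon>)\<^sup>2)}
      \<le> sqrt 2 ^ d * exp (- x / (4 * \<sigma>\<^sup>2))"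
proof -
  interpret prob_space "noise_space n \<sigma>" using prob_space_noise_space \<sigma> .
  let ?M = "noise_space n \<sigma>"
  let ?Q = "\<lambda>\<epsilon>. \<Sum>k<d. (dot n (us k) \<epsilon>)\<^sup>2"
  let ?u = "\<lambda>\<epsilon>. ennreal (exp (?Q \<epsilon> / (4 * \<sigma>\<^sup>2)))"
  let ?c = "ennreal (exp (- x / (4 * \<sigma>\<^sup>2)))"
  have [measurable]: "?Q \<in> borel_measurable ?M"
    unfolding dot_def noise_space_def by measurable
  have "{\<epsilon>\<in>space ?M. x < ?Q \<epsilon>} \<subseteq> {\<epsilon>\<in>space ?M. 1 \<le> ?c * ?u \<epsilon>}"
  proof safe
    fix \<epsilon> assume "x < ?Q \<epsilon>"
    then have "1 \<le> exp (- x / (4 * \<sigma>\<^sup>2)) * exp (?Q \<epsilon> / (4 * \<sigma>\<^sup>2))"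
      using \<sigma> by (simp add: divide_simps flip: exp_add)
    then show "1 \<le> ?c * ?u \<epsilon>"
      by (simp add: ennreal_mult'[symmetric])
  qed
  then have "emeasure ?M {\<epsilon>\<in>space ?M. x < ?Q \<epsilon>} \<le> emeasure ?M {\<epsilon>\<in>space ?M. 1 \<le> ?c * ?u \<epsilon>}"
    by (intro emeasure_mono) measurable
  also have "\<dots> \<le> ?c * (\<integral>\<^sup>+\<epsilon>. ?u \<epsilon> * indicator (space ?M) \<epsilon> \<partial>?M)"
    by (rule nn_integral_Markov_inequality) auto
  also have "(\<integral>\<^sup>+\<epsilon>. ?u \<epsilon> * indicator (space ?M) \<epsilon> \<partial>?M) = ennreal (sqrt 2 ^ d)"
    using nn_integral_noise_exp_projection_sq[OF \<sigma> on]
    by (simp add: nn_integral_cong[of ?M "\<lambda>\<epsilon>. ?u \<epsilon> * indicator (space ?M) \<epsilon>" ?u])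
  finally show ?thesis
    by (simp add: emeasure_eq_measure ennreal_mult'[symmetric] mult.commute)
qed

lemma dot_le_orthonormal_projection:
  assumes "in_orthonormal_span n us d v"
  shows "2 * dot n e v \<le> dot n v v / 4 + 4 * (\<Sum>k<d. (dot n (us k) e)\<^sup>2)"
proof -
  have "2 * dot n e v = (\<Sum>k<d. 2 * (dot n v (us k) * dot n (us k) e))"
    using dot_orthonormal_expansion[OF assms, of e] by (simp add: dot_commute[of n e v] sum_distrib_left)
  also have "\<dots> \<le> (\<Sum>k<d. (dot n v (us k))\<^sup>2 / 4 + 4 * (dot n (us k) e)\<^sup>2)"
  proof (rule sum_mono)
    fix k
    have "0 \<le> (dot n v (us k) / 2 - 2 * dot n (us k) e)\<^sup>2" by simp
    then show "2 * (dot n v (us k) * dot n (us k) e) \<le> (dot n v (us k))\<^sup>2 / 4 + 4 * (dot n (us k) e)\<^sup>2"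
      by (simp add: power2_eq_square algebra_simps)
  qed
  also have "\<dots> = dot n v v / 4 + 4 * (\<Sum>k<d. (dot n (us k) e)\<^sup>2)"
    using dot_orthonormal_expansion[OF assms, of v]
    by (simp add: dot_commute[of n "us _" v] power2_eq_square sum.distrib sum_divide_distrib sum_distrib_left)
  finally show ?thesis .
qed

lemma noise_span_event:
  assumes \<sigma>: "\<sigma> > 0" and J: "finite J"
  shows "\<exists>E\<in>sets (noise_space n \<sigma>). measure (noise_space n \<sigma>) E \<le> sqrt 2 ^ card J * exp (- x / (4 * \<sigma>\<^sup>2))
    \<and> (\<forall>\<epsilon>\<in>space (noise_space n \<sigma>) - E. \<forall>a.
          2 * dot n \<epsilon> (lin_comb g J a) \<le> dot n (lin_comb g J a) (lin_comb g J a) / 4 + 4 * x)"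
proof -
  obtain us d where on: "orthonormal n us d" and "d \<le> card J"
    and span: "\<forall>j\<in>J. in_orthonormal_span n us d (g j)"
    using gram_schmidt[OF J] by blast
  define E where "E = {\<epsilon>\<in>space (noise_space n \<sigma>). x < (\<Sum>k<d. (dot n (us k) \<epsilon>)\<^sup>2)}"
  have "E \<in> sets (noise_space n \<sigma>)"
    unfolding E_def dot_def noise_space_def by measurable
  moreover have "measure (noise_space n \<sigma>) E \<le> sqrt 2 ^ card J * exp (- x / (4 * \<sigma>\<^sup>2))"
  proof -
    have "sqrt 2 ^ d \<le> sqrt 2 ^ card J"
      using \<open>d \<le> card J\<close> by (intro power_increasing) auto
    then show ?thesis
      unfolding E_def using noise_projection_tail[OF \<sigma> on, of x]
      by (smt (verit) exp_gt_zero mult_right_mono)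
  qed
  moreover have "2 * dot n \<epsilon> (lin_comb g J a) \<le> dot n (lin_comb g J a) (lin_comb g J a) / 4 + 4 * x"
    if "\<epsilon> \<in> space (noise_space n \<sigma>) - E" for \<epsilon> a
  proof -
    have "(\<Sum>k<d. (dot n (us k) \<epsilon>)\<^sup>2) \<le> x"
      using that unfolding E_def by auto
    moreover have "in_orthonormal_span n us d (lin_comb g J a)"
      using span by (intro in_orthonormal_span_lin_comb) auto
    ultimately show ?thesis
      using dot_le_orthonormal_projection[of n us d "lin_comb g J a" \<epsilon>] by linarith
  qed
  ultimately show ?thesis by blast
qed

lemma sparse_union_bound_numeric:
  fixes p :: nat
  assumes "p \<ge> 1"
  shows "2 * (exp 1 * p) powr -10 * (1 + 2 * (exp 1 * p) powr -10) ^ p \<le> 4 * (exp 1 * p) powr -9"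
proof -
  define x where "x = exp 1 * p"
  define b where "b = x powr -10"
  have x: "x \<ge> exp 1"
    using assms by (simp add: x_def)
  then have "x \<ge> 1"
    using one_le_exp_iff[of "1::real"] by linarith
  have "x * x powr -10 = x powr (1 + -10)"
    using \<open>x \<ge> 1\<close> by (intro powr_mult_base) simp
  then have b: "b \<ge> 0" "b * x = x powr -9"
    by (simp_all add: b_def mult.commute)
  have "x powr -9 \<le> 1"
    using \<open>x \<ge> 1\<close> by (simp add: powr_minus inverse_le_1_iff ge_one_powr_ge_zero)
  have "2 * b * p \<le> exp 1 * b * p"
    using b(1) exp_ge_add_one_self[of 1] by (intro mult_right_mono) auto
  also have "\<dots> = b * x"
    by (simp add: x_def)
  finally have "2 * b * p \<le> 1"
    using b(2) \<open>x powr -9 \<le> 1\<close> by simp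
  have "(1 + 2 * b) ^ p \<le> exp (2 * b) ^ p"
    using b by (intro power_mono) (auto simp: add.commute)
  also have "\<dots> = exp (2 * b * p)"
    by (simp add: exp_of_nat_mult[symmetric] mult.commute)
  also have "\<dots> \<le> exp 1"
    using \<open>2 * b * p \<le> 1\<close> by simp
  also have "\<dots> \<le> 2 * x"
    using x \<open>x \<ge> 1\<close> by linarith
  finally have "2 * b * (1 + 2 * b) ^ p \<le> 2 * b * (2 * x)"
    using b by (intro mult_left_mono) auto
  then show ?thesis
    using b unfolding x_def[symmetric] b_def[symmetric] by simp
qed

(* The generator None stands for the intercept, Some c for the c-th column. *)
definition support_noise_bound :: "nat \<Rightarrow> ('a option \<Rightarrow> nat \<Rightarrow> real) \<Rightarrow> 'a set \<Rightarrow> real \<Rightarrow> (nat \<Rightarrow> real) \<Rightarrow> bool" where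
  "support_noise_bound n g T s \<epsilon> \<longleftrightarrow> (\<forall>a.
     2 * dot n \<epsilon> (lin_comb g (insert None (Some ` T)) a)
     \<le> dot n (lin_comb g (insert None (Some ` T)) a) (lin_comb g (insert None (Some ` T)) a) / 4
       + 160 * s * (card T + 1))"

definition sparse_noise_bound :: "nat \<Rightarrow> (nat option \<Rightarrow> nat \<Rightarrow> real) \<Rightarrow> nat \<Rightarrow> real \<Rightarrow> (nat \<Rightarrow> real) \<Rightarrow> bool" where
  "sparse_noise_bound n g p s \<epsilon> \<longleftrightarrow> (\<forall>T\<subseteq>{..<p}. support_noise_bound n g T s \<epsilon>)"

lemma support_noise_event:
  fixes g :: "'a option \<Rightarrow> nat \<Rightarrow> real"
  assumes \<sigma>: "\<sigma> > 0" and T: "finite T"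
  shows "\<exists>E\<in>sets (noise_space n \<sigma>). measure (noise_space n \<sigma>) E \<le> (2 * exp (- 10 * L)) ^ (card T + 1) \<and>
    (\<forall>\<epsilon>\<in>space (noise_space n \<sigma>) - E. support_noise_bound n g T (\<sigma>\<^sup>2 * L) \<epsilon>)"
proof -
  let ?J = "insert None (Some ` T)" and ?k = "card T + 1" and ?x = "40 * (\<sigma>\<^sup>2 * L) * (card T + 1)"
  obtain E where E: "E \<in> sets (noise_space n \<sigma>)"
    "measure (noise_space n \<sigma>) E \<le> sqrt 2 ^ card ?J * exp (- ?x / (4 * \<sigma>\<^sup>2))"
    "\<forall>\<epsilon>\<in>space (noise_space n \<sigma>) - E. \<forall>a.
       2 * dot n \<epsilon> (lin_comb g ?J a) \<le> dot n (lin_comb g ?J a) (lin_comb g ?J a) / 4 + 4 * ?x"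
    using noise_span_event[OF \<sigma>, of ?J n ?x g] T by auto
  have "- ?x / (4 * \<sigma>\<^sup>2) = real ?k * (- 10 * L)"
    using \<sigma> by (simp add: field_simps)
  moreover have "card ?J = ?k"
    using T by (simp add: card_image)
  ultimately have "measure (noise_space n \<sigma>) E \<le> sqrt 2 ^ ?k * exp (- 10 * L) ^ ?k"
    using E(2) by (simp only: exp_of_nat_mult)
  also have "\<dots> \<le> (2 * exp (- 10 * L)) ^ ?k"
    unfolding power_mult_distrib
    by (intro mult_right_mono power_mono) (auto simp: real_sqrt_le_iff[of 2 "2\<^sup>2", simplified])
  finally have "measure (noise_space n \<sigma>) E \<le> (2 * exp (- 10 * L)) ^ ?k" .
  moreover have "\<forall>\<epsilon>\<in>space (noise_space n \<sigma>) - E. support_noise_bound n g T (\<sigma>\<^sup>2 * L) \<epsilon>"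
    using E(3) unfolding support_noise_bound_def by (simp add: ac_simps)
  ultimately show ?thesis
    using E(1) by blast
qed

lemma sparse_noise_event:
  fixes g :: "nat option \<Rightarrow> nat \<Rightarrow> real"
  assumes \<sigma>: "\<sigma> > 0" and p: "p \<ge> 1"
  shows "\<exists>A\<in>sets (noise_space n \<sigma>). measure (noise_space n \<sigma>) A \<ge> 1 - 4 * (exp 1 * p) powr -9 \<and>
    (\<forall>\<epsilon>\<in>A. sparse_noise_bound n g p (\<sigma>\<^sup>2 * ln (exp 1 * p)) \<epsilon>)"
proof -
  interpret prob_space "noise_space n \<sigma>" using prob_space_noise_space \<sigma> .
  let ?M = "noise_space n \<sigma>" and ?s = "\<sigma>\<^sup>2 * ln (exp 1 * p)"
  define b where "b = (exp 1 * p) powr -10"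
  have b: "b \<ge> 0" "b = exp (- 10 * ln (exp 1 * p))"
    using p by (auto simp: b_def powr_def)
  have "\<forall>T\<in>Pow {..<p}. \<exists>E\<in>sets ?M. measure ?M E \<le> (2 * b) ^ (card T + 1) \<and>
      (\<forall>\<epsilon>\<in>space ?M - E. support_noise_bound n g T ?s \<epsilon>)"
    unfolding b(2) by (intro ballI support_noise_event[OF \<sigma>]) (auto intro: finite_subset)
  then obtain E where E: "\<forall>T\<in>Pow {..<p}. E T \<in> sets ?M \<and>
      measure ?M (E T) \<le> (2 * b) ^ (card T + 1) \<and> (\<forall>\<epsilon>\<in>space ?M - E T. support_noise_bound n g T ?s \<epsilon>)"
    by metis
  define A where "A = space ?M - (\<Union>T\<in>Pow {..<p}. E T)"
  have union_sets: "(\<Union>T\<in>Pow {..<p}. E T) \<in> sets ?M"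
    using E by auto
  have "measure ?M (\<Union>T\<in>Pow {..<p}. E T) \<le> (\<Sum>T\<in>Pow {..<p}. measure ?M (E T))"
    using E by (intro measure_UNION_le) auto
  also have "\<dots> \<le> (\<Sum>T\<in>Pow {..<p}. (2 * b) ^ (card T + 1))"
    using E by (intro sum_mono) auto
  also have "\<dots> = 2 * b * (1 + 2 * b) ^ p"
    using prod_add[of "{..<p}" "\<lambda>_. 2 * b" "\<lambda>_. 1"] by (simp add: sum_distrib_left add.commute)
  also have "\<dots> \<le> 4 * (exp 1 * p) powr -9"
    unfolding b_def using p by (rule sparse_union_bound_numeric)
  finally have "measure ?M A \<ge> 1 - 4 * (exp 1 * p) powr -9"
    using prob_compl[OF union_sets] unfolding A_def by simp
  moreover have "A \<in> sets ?M"
    using union_sets unfolding A_def by auto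
  moreover have "sparse_noise_bound n g p ?s \<epsilon>" if "\<epsilon> \<in> A" for \<epsilon>
    using E that unfolding sparse_noise_bound_def A_def by blast
  ultimately show ?thesis
    by blast
qed

section \<open>The dummy-coded design\<close>

lemma offs_add_eq_sum:
  assumes "j \<ge> 1"
  shows "offs pj j + pj j = (\<Sum>i\<in>{1..j}. pj i)"
proof -
  have "{1..j} = insert j {1..<j}"
    using assms by auto
  then show ?thesis
    unfolding offs_def by simp
qed

lemma offs_add_le_Pcat:
  assumes "j \<in> {1..q}"
  shows "offs pj j + pj j \<le> Pcat q pj"
proof -
  have "(\<Sum>i\<in>{1..j}. pj i) \<le> (\<Sum>i\<in>{1..q}. pj i)"
    using assms by (intro sum_mono2) auto
  with assms show ?thesis
    unfolding Pcat_def by (simp add: offs_add_eq_sum)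
qed

lemma offs_add_le_offs:
  assumes "1 \<le> j" "j < j'"
  shows "offs pj j + pj j \<le> offs pj j'"
proof -
  have "(\<Sum>i\<in>{1..j}. pj i) \<le> (\<Sum>i\<in>{1..<j'}. pj i)"
    using assms by (intro sum_mono2) auto
  with assms show ?thesis
    by (simp add: offs_add_eq_sum offs_def[of pj j'])
qed

lemma one_le_ptot:
  assumes "q \<ge> 1" and "\<forall>j\<in>{1..q}. pj j \<ge> 1"
  shows "1 \<le> ptot q pj N"
proof -
  have "pj 1 \<le> Pcat q pj"
    using assms(1) unfolding Pcat_def by (intro member_le_sum) auto
  with assms show ?thesis
    unfolding ptot_def by force
qed

lemma finite_Iset [simp]: "finite (Iset pj j)"
  by (simp add: Iset_def)

lemma Iset_disjoint:
  assumes "j \<in> {1..q}" "j' \<in> {1..q}" "c \<in> Iset pj j" "c \<in> Iset pj j'"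
  shows "j = j'"
proof (rule ccontr)
  assume "j \<noteq> j'"
  then consider "j < j'" | "j' < j" by linarith
  then show False
  proof cases
    case 1
    with assms offs_add_le_offs[of j j' pj] show False by (auto simp: Iset_def)
  next
    case 2
    with assms offs_add_le_offs[of j' j pj] show False by (auto simp: Iset_def)
  qed
qed

lemma Iset_subset_columns: "j \<in> {1..q} \<Longrightarrow> Iset pj j \<subseteq> {..<ptot q pj N}"
  using offs_add_le_Pcat[of j q pj] unfolding Iset_def ptot_def by auto

lemma design_Iset:
  assumes j: "j \<in> {1..q}" and c: "c \<in> Iset pj j"
  shows "design q pj N Cv W i c = (if Cv i j = c - offs pj j + 1 then 1 else 0)"
proof -
  let ?hit = "\<lambda>j'. if c \<in> Iset pj j' \<and> Cv i j' = c - offs pj j' + 1 then 1 else (0::real)"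
  have "(\<Sum>j'\<in>{1..q}. ?hit j') = ?hit j + (\<Sum>j'\<in>{1..q} - {j}. ?hit j')"
    using j by (simp add: sum.remove)
  also have "(\<Sum>j'\<in>{1..q} - {j}. ?hit j') = 0"
    using Iset_disjoint[OF j _ c] by (intro sum.neutral) auto
  finally have hits: "(\<Sum>j'\<in>{1..q}. ?hit j') = (if Cv i j = c - offs pj j + 1 then 1 else 0)"
    using c by simp
  have "\<not> (Pcat q pj \<le> c \<and> c < ptot q pj N)"
    using offs_add_le_Pcat[OF j, of pj] c unfolding Iset_def by auto
  then show ?thesis
    unfolding design_def hits by (simp only: if_False add_0_right)
qed

lemma sum_design_Iset:
  assumes j: "j \<in> {1..q}" and Cv: "Cv i j \<in> {1..pj j}"
  shows "(\<Sum>c\<in>Iset pj j. design q pj N Cv W i c) = 1"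
proof -
  let ?c = "offs pj j + Cv i j - 1"
  have "?c \<in> Iset pj j"
    using Cv by (auto simp: Iset_def)
  moreover have "design q pj N Cv W i c = (if c = ?c then 1 else 0)" if "c \<in> Iset pj j" for c
  proof -
    have "(Cv i j = c - offs pj j + 1) = (c = ?c)"
      using that Cv by (auto simp: Iset_def)
    then show ?thesis
      using design_Iset[OF j that] by simp
  qed
  ultimately show ?thesis
    by simp
qed

definition shift_group :: "(nat \<Rightarrow> nat) \<Rightarrow> nat \<Rightarrow> real \<Rightarrow> (nat \<Rightarrow> real) \<Rightarrow> nat \<Rightarrow> real" where
  "shift_group pj j t \<beta> k = (if k \<in> Iset pj j then \<beta> k - t else \<beta> k)"

lemma Xb_shift_group:
  assumes j: "j \<in> {1..q}" and Cv: "Cv i j \<in> {1..pj j}"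
  shows "Xb q pj N Cv W (shift_group pj j t \<beta>) i = Xb q pj N Cv W \<beta> i - t"
proof -
  let ?d = "design q pj N Cv W i"
  have "Xb q pj N Cv W (shift_group pj j t \<beta>) i
      = Xb q pj N Cv W \<beta> i - t * (\<Sum>c<ptot q pj N. if c \<in> Iset pj j then ?d c else 0)"
    unfolding Xb_def shift_group_def
    by (simp add: sum_distrib_left sum_subtractf[symmetric] algebra_simps if_distrib cong: if_cong)
  also have "(\<Sum>c<ptot q pj N. if c \<in> Iset pj j then ?d c else 0) = (\<Sum>c\<in>Iset pj j. ?d c)"
    using Iset_subset_columns[OF j, of pj N] by (simp add: sum.If_cases Int_absorb1 Int_absorb2)
  finally show ?thesis
    using sum_design_Iset[of j q Cv i pj N W] j Cv by simp
qed

lemma nvals_shift_group: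
  assumes j: "j \<in> {1..q}"
  shows "nvals q pj (shift_group pj j t \<beta>) = nvals q pj \<beta>"
  unfolding nvals_def
proof (intro sum.cong refl)
  fix j' assume j': "j' \<in> {1..q}"
  show "card (shift_group pj j t \<beta> ` Iset pj j') = card (\<beta> ` Iset pj j')"
  proof (cases "j' = j")
    case True
    have "shift_group pj j t \<beta> ` Iset pj j = (\<lambda>x. x - t) ` \<beta> ` Iset pj j"
      unfolding shift_group_def image_image by (intro image_cong) auto
    then show ?thesis
      using True by (simp add: card_image)
  next
    case False
    then have "shift_group pj j t \<beta> ` Iset pj j' = \<beta> ` Iset pj j'"
      unfolding shift_group_def using Iset_disjoint[OF j j'] by (intro image_cong) auto
    then show ?thesis by simp
  qed
qed

lemma l0_shift_group_less:
  assumes j: "j \<in> {1..q}" and k: "k \<in> Iset pj j" and no_zero: "0 \<notin> \<beta> ` Iset pj j"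
  shows "l0 (ptot q pj N) (shift_group pj j (\<beta> k) \<beta>) < l0 (ptot q pj N) \<beta>"
proof -
  let ?S = "\<lambda>\<beta>. {c\<in>{..<ptot q pj N}. \<beta> c \<noteq> 0}"
  have "?S (shift_group pj j (\<beta> k) \<beta>) \<subseteq> ?S \<beta> - {k}"
    using k no_zero unfolding shift_group_def by (auto split: if_splits)
  then have "card (?S (shift_group pj j (\<beta> k) \<beta>)) \<le> card (?S \<beta> - {k})"
    by (intro card_mono) auto
  also have "\<dots> < card (?S \<beta>)"
    using k no_zero Iset_subset_columns[OF j, of pj N] by (intro card_Diff1_less) force+
  finally show ?thesis
    unfolding l0_def .
qed

lemma card_support_union_le: "card {c\<in>{..<p}. \<beta>h c \<noteq> 0 \<or> \<beta> c \<noteq> 0} \<le> l0 p \<beta>h + l0 p \<beta>"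
proof -
  have support_union: "{c\<in>{..<p}. \<beta>h c \<noteq> 0 \<or> \<beta> c \<noteq> 0} = {c\<in>{..<p}. \<beta>h c \<noteq> 0} \<union> {c\<in>{..<p}. \<beta> c \<noteq> 0}"
    by blast
  show ?thesis
    unfolding l0_def support_union by (rule card_Un_le)
qed

section \<open>The penalised least squares minimiser\<close>

lemma minimiser_zero_in_group:
  assumes lam0: "lam0 > 0" and j: "j \<in> {1..q}" and pj: "pj j \<ge> 1"
    and Cv: "\<forall>i<n. Cv i j \<in> {1..pj j}"
    and min: "\<forall>\<alpha> \<beta>. objective n q pj N Cv W lam lam0 y \<alpha>h \<beta>h \<le> objective n q pj N Cv W lam lam0 y \<alpha> \<beta>"
  shows "0 \<in> \<beta>h ` Iset pj j"
proof (rule ccontr)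
  assume no_zero: "0 \<notin> \<beta>h ` Iset pj j"
  define k where "k = offs pj j"
  have k: "k \<in> Iset pj j"
    using pj unfolding k_def Iset_def by auto
  define \<beta>' where "\<beta>' = shift_group pj j (\<beta>h k) \<beta>h"
  have "sqnorm n (\<lambda>i. y i - (\<alpha>h + \<beta>h k) - Xb q pj N Cv W \<beta>' i) = sqnorm n (\<lambda>i. y i - \<alpha>h - Xb q pj N Cv W \<beta>h i)"
    unfolding sqnorm_def \<beta>'_def using Cv j by (intro sum.cong) (auto simp: Xb_shift_group algebra_simps)
  then have "objective n q pj N Cv W lam lam0 y (\<alpha>h + \<beta>h k) \<beta>' < objective n q pj N Cv W lam lam0 y \<alpha>h \<beta>h"
    using l0_shift_group_less[OF j k no_zero, of N] lam0
    unfolding objective_def \<beta>'_def nvals_shift_group[OF j] by simp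
  with min show False
    by (meson not_le)
qed

lemma nvals_le_Kfun_add: "nvals q pj \<beta> \<le> Kfun q pj \<beta> + q"
proof -
  have "nvals q pj \<beta> \<le> (\<Sum>j\<in>{1..q}. card (\<beta> ` Iset pj j - {0}) + 1)"
    unfolding nvals_def by (intro sum_mono) (auto simp: card_Diff_singleton_if)
  then show ?thesis
    unfolding Kfun_def sum.distrib by simp
qed

lemma nvals_eq_Kfun_add:
  assumes "\<And>j. j \<in> {1..q} \<Longrightarrow> 0 \<in> \<beta> ` Iset pj j"
  shows "nvals q pj \<beta> = Kfun q pj \<beta> + q"
proof -
  have "nvals q pj \<beta> = (\<Sum>j\<in>{1..q}. card (\<beta> ` Iset pj j - {0}) + 1)"
    unfolding nvals_def
  proof (intro sum.cong refl)
    fix j assume "j \<in> {1..q}"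
    then show "card (\<beta> ` Iset pj j) = card (\<beta> ` Iset pj j - {0}) + 1"
      using assms card_Suc_Diff1[of "\<beta> ` Iset pj j" 0] by simp
  qed
  then show ?thesis
    unfolding Kfun_def sum.distrib by simp
qed

definition residual :: "nat \<Rightarrow> (nat \<Rightarrow> nat) \<Rightarrow> nat \<Rightarrow> (nat \<Rightarrow> nat \<Rightarrow> nat) \<Rightarrow> (nat \<Rightarrow> nat \<Rightarrow> real)
    \<Rightarrow> (nat \<Rightarrow> real) \<Rightarrow> real \<Rightarrow> (nat \<Rightarrow> real) \<Rightarrow> nat \<Rightarrow> real" where
  "residual q pj N Cv W f \<alpha> \<beta> i = f i - Xb q pj N Cv W \<beta> i - \<alpha>"

definition regressors :: "nat \<Rightarrow> (nat \<Rightarrow> nat) \<Rightarrow> nat \<Rightarrow> (nat \<Rightarrow> nat \<Rightarrow> nat) \<Rightarrow> (nat \<Rightarrow> nat \<Rightarrow> real)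
    \<Rightarrow> nat option \<Rightarrow> nat \<Rightarrow> real" where
  "regressors q pj N Cv W c i = (case c of None \<Rightarrow> 1 | Some c \<Rightarrow> design q pj N Cv W i c)"

lemma sqnorm_residual_add_noise:
  "sqnorm n (\<lambda>i. f i + \<epsilon> i - \<alpha> - Xb q pj N Cv W \<beta> i)
    = sqnorm n (residual q pj N Cv W f \<alpha> \<beta>) + 2 * dot n \<epsilon> (residual q pj N Cv W f \<alpha> \<beta>) + dot n \<epsilon> \<epsilon>"
proof -
  have "(f i + \<epsilon> i - \<alpha> - Xb q pj N Cv W \<beta> i)\<^sup>2
      = (residual q pj N Cv W f \<alpha> \<beta> i)\<^sup>2 + 2 * (\<epsilon> i * residual q pj N Cv W f \<alpha> \<beta> i) + \<epsilon> i * \<epsilon> i" for i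
    by (simp add: residual_def power2_eq_square algebra_simps)
  then show ?thesis
    unfolding sqnorm_def dot_def by (simp add: sum.distrib sum_distrib_left)
qed

lemma residual_diff_lin_comb:
  assumes T: "T \<subseteq> {..<ptot q pj N}" and agree: "\<And>c. c < ptot q pj N \<Longrightarrow> c \<notin> T \<Longrightarrow> \<beta>h c = \<beta> c"
  shows "residual q pj N Cv W f \<alpha> \<beta> i - residual q pj N Cv W f \<alpha>h \<beta>h i
    = lin_comb (regressors q pj N Cv W) (insert None (Some ` T))
        (\<lambda>c. case c of None \<Rightarrow> \<alpha>h - \<alpha> | Some c \<Rightarrow> \<beta>h c - \<beta> c) i"
proof -
  have "Xb q pj N Cv W \<beta>h i - Xb q pj N Cv W \<beta> i = (\<Sum>c<ptot q pj N. (\<beta>h c - \<beta> c) * design q pj N Cv W i c)"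
    unfolding Xb_def by (simp add: sum_subtractf[symmetric] algebra_simps)
  also have "\<dots> = (\<Sum>c\<in>T. (\<beta>h c - \<beta> c) * design q pj N Cv W i c)"
    using T agree by (intro sum.mono_neutral_right) auto
  moreover have "finite T"
    using T finite_subset by blast
  ultimately show ?thesis
    by (simp add: residual_def lin_comb_def regressors_def sum.reindex)
qed

lemma minimiser_basic_inequality:
  fixes lam lam0 :: real
  assumes n: "n \<ge> 1" and lam: "lam \<ge> 0" and lam0: "lam0 > 0"
    and pj: "\<forall>j\<in>{1..q}. pj j \<ge> 1" and Cv: "\<forall>i<n. \<forall>j\<in>{1..q}. Cv i j \<in> {1..pj j}"
    and min: "\<forall>\<alpha> \<beta>. objective n q pj N Cv W lam lam0 (\<lambda>i. f i + \<epsilon> i) \<alpha>h \<beta>h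
                 \<le> objective n q pj N Cv W lam lam0 (\<lambda>i. f i + \<epsilon> i) \<alpha> \<beta>"
  shows "sqnorm n (residual q pj N Cv W f \<alpha>h \<beta>h)
      + n * lam0 * l0 (ptot q pj N) \<beta>h + n * lam * Kfun q pj \<beta>h
    \<le> sqnorm n (residual q pj N Cv W f \<alpha> \<beta>)
      + 2 * dot n \<epsilon> (\<lambda>i. residual q pj N Cv W f \<alpha> \<beta> i - residual q pj N Cv W f \<alpha>h \<beta>h i)
      + n * lam0 * l0 (ptot q pj N) \<beta> + n * lam * Kfun q pj \<beta>"
proof -
  let ?r = "residual q pj N Cv W f \<alpha> \<beta>" and ?rh = "residual q pj N Cv W f \<alpha>h \<beta>h"
  have "nvals q pj \<beta>h = Kfun q pj \<beta>h + q"
    using minimiser_zero_in_group[OF lam0 _ _ _ min] pj Cv by (intro nvals_eq_Kfun_add) auto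
  moreover have "lam * nvals q pj \<beta> \<le> lam * (Kfun q pj \<beta> + q)"
    using lam nvals_le_Kfun_add[of q pj \<beta>] by (intro mult_left_mono) auto
  moreover have "objective n q pj N Cv W lam lam0 (\<lambda>i. f i + \<epsilon> i) \<alpha>h \<beta>h
      \<le> objective n q pj N Cv W lam lam0 (\<lambda>i. f i + \<epsilon> i) \<alpha> \<beta>"
    using min by blast
  ultimately have H: "(sqnorm n ?rh + 2 * dot n \<epsilon> ?rh) / n + (lam0 * l0 (ptot q pj N) \<beta>h + lam * Kfun q pj \<beta>h)
      \<le> (sqnorm n ?r + 2 * dot n \<epsilon> ?r) / n + (lam0 * l0 (ptot q pj N) \<beta> + lam * Kfun q pj \<beta>)"
    unfolding objective_def sqnorm_residual_add_noise by (simp add: add_divide_distrib algebra_simps)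
  have scale: "a + n * b \<le> c + n * d" if "a / n + b \<le> c / n + d" for a b c d :: real
    using mult_left_mono[OF that, of n] n by (simp add: distrib_left)
  have "sqnorm n ?rh + 2 * dot n \<epsilon> ?rh + n * lam0 * l0 (ptot q pj N) \<beta>h + n * lam * Kfun q pj \<beta>h
      \<le> sqnorm n ?r + 2 * dot n \<epsilon> ?r + n * lam0 * l0 (ptot q pj N) \<beta> + n * lam * Kfun q pj \<beta>"
    using scale[OF H] by (simp add: algebra_simps)
  then show ?thesis
    by (simp add: dot_commute[of n \<epsilon>] dot_diff_left)
qed

lemma minimiser_risk_bound:
  fixes lam lam0 s :: real
  assumes n: "n \<ge> 1" and lam: "lam \<ge> 0" and lam0: "lam0 > 0" and s: "s \<ge> 0"
    and lam0_large: "320 * s \<le> n * lam0"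
    and pj: "\<forall>j\<in>{1..q}. pj j \<ge> 1" and Cv: "\<forall>i<n. \<forall>j\<in>{1..q}. Cv i j \<in> {1..pj j}"
    and noise: "sparse_noise_bound n (regressors q pj N Cv W) (ptot q pj N) s \<epsilon>"
    and min: "\<forall>\<alpha> \<beta>. objective n q pj N Cv W lam lam0 (\<lambda>i. f i + \<epsilon> i) \<alpha>h \<beta>h
                 \<le> objective n q pj N Cv W lam lam0 (\<lambda>i. f i + \<epsilon> i) \<alpha> \<beta>"
  shows "sqnorm n (residual q pj N Cv W f \<alpha>h \<beta>h) / n + lam * Kfun q pj \<beta>h
    \<le> 3 * risk n q pj N Cv W lam lam0 f \<alpha> \<beta> + 320 * s / n"
proof -
  let ?p = "ptot q pj N"
  let ?r = "residual q pj N Cv W f \<alpha> \<beta>" and ?rh = "residual q pj N Cv W f \<alpha>h \<beta>h"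
  define T where "T = {c\<in>{..<?p}. \<beta>h c \<noteq> 0 \<or> \<beta> c \<noteq> 0}"
  define v where "v = (\<lambda>i. ?r i - ?rh i)"
  have T: "T \<subseteq> {..<?p}"
    unfolding T_def by auto
  have "v = lin_comb (regressors q pj N Cv W) (insert None (Some ` T))
      (\<lambda>c. case c of None \<Rightarrow> \<alpha>h - \<alpha> | Some c \<Rightarrow> \<beta>h c - \<beta> c)"
    unfolding v_def using T by (intro ext residual_diff_lin_comb) (auto simp: T_def)
  then have cross: "2 * dot n \<epsilon> v \<le> dot n v v / 4 + 160 * s * (card T + 1)"
    using noise T unfolding sparse_noise_bound_def support_noise_bound_def by simp
  have "dot n v v \<le> 2 * sqnorm n ?r + 2 * sqnorm n ?rh"
    unfolding v_def by (rule dot_diff_self_le)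
  moreover have "160 * s * card T \<le> n * lam0 / 2 * l0 ?p \<beta>h + n * lam0 / 2 * l0 ?p \<beta>"
  proof -
    have "card T \<le> l0 ?p \<beta>h + l0 ?p \<beta>"
      unfolding T_def by (rule card_support_union_le)
    then have card_T: "real (card T) \<le> l0 ?p \<beta>h + l0 ?p \<beta>"
      by simp
    have "160 * s * card T \<le> 160 * s * l0 ?p \<beta>h + 160 * s * l0 ?p \<beta>"
      using mult_left_mono[OF card_T, of "160 * s"] s by (simp add: distrib_left)
    also have "\<dots> \<le> n * lam0 / 2 * l0 ?p \<beta>h + n * lam0 / 2 * l0 ?p \<beta>"
      using lam0_large by (intro add_mono mult_right_mono) auto
    finally show ?thesis .
  qed
  moreover have "n * lam0 * l0 ?p \<beta>h \<ge> 0" "n * lam * Kfun q pj \<beta>h \<ge> 0" "n * lam * Kfun q pj \<beta> \<ge> 0"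
    using lam lam0 by simp_all
  moreover note minimiser_basic_inequality[OF n lam lam0 pj Cv min, of \<alpha> \<beta>, folded v_def]
  ultimately have "sqnorm n ?rh + n * lam * Kfun q pj \<beta>h
      \<le> 3 * (sqnorm n ?r + n * lam0 * l0 ?p \<beta> + n * lam * Kfun q pj \<beta>) + 320 * s"
    using cross by (simp add: distrib_left)
  then have "(sqnorm n ?rh + n * lam * Kfun q pj \<beta>h) / n
      \<le> (3 * (sqnorm n ?r + n * lam0 * l0 ?p \<beta> + n * lam * Kfun q pj \<beta>) + 320 * s) / n"
    by (rule divide_right_mono) simp
  moreover have "real n \<noteq> 0"
    using n by simp
  ultimately show ?thesis
    unfolding risk_def residual_def[abs_def] by (simp add: add_divide_distrib)
qed

lemma le_mult_INF_add:
  fixes g :: "'a \<Rightarrow> real"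
  assumes "c > 0" and "\<And>x. y \<le> c * (g x + t)"
  shows "y \<le> c * ((INF x. g x) + t)"
proof -
  have "y / c - t \<le> (INF x. g x)"
    using assms by (intro cINF_greatest) (auto simp: field_simps)
  then show ?thesis
    using assms(1) by (simp add: field_simps)
qed

lemma minimiser_oracle_inequality:
  fixes lam lam0 s :: real
  assumes n: "n \<ge> 1" and lam: "lam \<ge> 0" and lam0: "lam0 > 0" and s: "s \<ge> 0"
    and lam0_large: "320 * s \<le> n * lam0"
    and pj: "\<forall>j\<in>{1..q}. pj j \<ge> 1" and Cv: "\<forall>i<n. \<forall>j\<in>{1..q}. Cv i j \<in> {1..pj j}"
    and noise: "sparse_noise_bound n (regressors q pj N Cv W) (ptot q pj N) s \<epsilon>"
    and min: "\<forall>\<alpha> \<beta>. objective n q pj N Cv W lam lam0 (\<lambda>i. f i + \<epsilon> i) \<alpha>h \<beta>h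
                 \<le> objective n q pj N Cv W lam lam0 (\<lambda>i. f i + \<epsilon> i) \<alpha> \<beta>"
  shows "sqnorm n (residual q pj N Cv W f \<alpha>h \<beta>h) / n + lam * Kfun q pj \<beta>h
    \<le> 320 * ((INF \<alpha>\<beta>::real \<times> (nat \<Rightarrow> real). risk n q pj N Cv W lam lam0 f (fst \<alpha>\<beta>) (snd \<alpha>\<beta>)) + s / n)"
proof (rule le_mult_INF_add)
  fix \<alpha>\<beta> :: "real \<times> (nat \<Rightarrow> real)"
  have "risk n q pj N Cv W lam lam0 f (fst \<alpha>\<beta>) (snd \<alpha>\<beta>) \<ge> 0"
    using lam lam0 unfolding risk_def sqnorm_def by (simp add: sum_nonneg)
  with minimiser_risk_bound[OF assms, of "fst \<alpha>\<beta>" "snd \<alpha>\<beta>"] s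
  show "sqnorm n (residual q pj N Cv W f \<alpha>h \<beta>h) / n + lam * Kfun q pj \<beta>h
      \<le> 320 * (risk n q pj N Cv W lam lam0 f (fst \<alpha>\<beta>) (snd \<alpha>\<beta>) + s / n)"
    by simp
qed simp

theorem theorem1:
  shows "\<exists>clam0 C. clam0 > 0 \<and> C > 0 \<and>
    (\<forall>(n::nat) (q::nat) (pj::nat \<Rightarrow> nat) (N::nat) (Cv::nat \<Rightarrow> nat \<Rightarrow> nat)
       (W::nat \<Rightarrow> nat \<Rightarrow> real) (f::nat \<Rightarrow> real) (\<sigma>::real) (lam::real) (lam0::real).
      n \<ge> 1 \<and> q \<ge> 1 \<and> (\<forall>j\<in>{1..q}. pj j \<ge> 1) \<and>
      (\<forall>i<n. \<forall>j\<in>{1..q}. Cv i j \<in> {1..pj j}) \<and>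
      \<sigma> > 0 \<and> lam \<ge> 0 \<and>
      lam0 \<ge> clam0 * \<sigma>\<^sup>2 * ln (exp 1 * real (ptot q pj N)) / real n
      \<longrightarrow>
      (\<exists>A \<in> sets (noise_space n \<sigma>).
         measure (noise_space n \<sigma>) A \<ge> 1 - 4 * (exp 1 * real (ptot q pj N)) powr (-9) \<and>
         (\<forall>\<epsilon>\<in>A. \<forall>\<alpha>h \<beta>h.
            (\<forall>\<alpha> \<beta>. objective n q pj N Cv W lam lam0 (\<lambda>i. f i + \<epsilon> i) \<alpha>h \<beta>h
                     \<le> objective n q pj N Cv W lam lam0 (\<lambda>i. f i + \<epsilon> i) \<alpha> \<beta>)
            \<longrightarrow>
            sqnorm n (\<lambda>i. f i - Xb q pj N Cv W \<beta>h i - \<alpha>h) / real n + lam * real (Kfun q pj \<beta>h)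
            \<le> C * ((INF \<alpha>\<beta>::real \<times> (nat \<Rightarrow> real). risk n q pj N Cv W lam lam0 f (fst \<alpha>\<beta>) (snd \<alpha>\<beta>))
                   + \<sigma>\<^sup>2 * ln (exp 1 * real (ptot q pj N)) / real n))))"
proof (intro exI[of _ "320::real"] conjI allI impI, goal_cases)
  case (3 n q pj N Cv W f \<sigma> lam lam0)
  define s where "s = \<sigma>\<^sup>2 * ln (exp 1 * real (ptot q pj N))"
  from 3 have n: "1 \<le> n" and q: "1 \<le> q" and pj: "\<forall>j\<in>{1..q}. 1 \<le> pj j"
    and Cv: "\<forall>i<n. \<forall>j\<in>{1..q}. Cv i j \<in> {1..pj j}" and \<sigma>: "0 < \<sigma>" and lam: "0 \<le> lam"
    and lam0: "320 * s \<le> n * lam0"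
    by (auto simp: s_def field_simps)
  have p: "1 \<le> ptot q pj N"
    using q pj by (rule one_le_ptot)
  then have "s > 0"
    using \<sigma> by (simp add: s_def ln_mult add_pos_nonneg)
  with lam0 n have "lam0 > 0"
    by (smt (verit) of_nat_0_le_iff zero_less_mult_iff)
  obtain A where A: "A \<in> sets (noise_space n \<sigma>)" "1 - 4 * (exp 1 * ptot q pj N) powr -9 \<le> measure (noise_space n \<sigma>) A"
    and noise: "\<forall>\<epsilon>\<in>A. sparse_noise_bound n (regressors q pj N Cv W) (ptot q pj N) s \<epsilon>"
    using sparse_noise_event[OF \<sigma> p, of n "regressors q pj N Cv W"] unfolding s_def by blast
  show ?case
  proof (intro bexI[OF _ A(1)] conjI ballI allI impI, goal_cases)
    case 1
    show ?case using A(2) .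
  next
    case (2 \<epsilon> \<alpha>h \<beta>h)
    from minimiser_oracle_inequality[OF n lam \<open>lam0 > 0\<close> less_imp_le[OF \<open>s > 0\<close>] lam0 pj Cv
        noise[rule_format, OF 2(1)] 2(2)]
    show ?case unfolding s_def residual_def[abs_def] .
  qed
qed simp_all

end
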